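(* Assume the vertex degrees of $G$ are uniformly bounded, let $\theta\in(0,1)$, $\rho=\lim_nR_n^{1/n}$, and let $z\in\mathbb C$ with $|z|>\theta\rho$. Then every $f\in\mathrm{Lip}_\theta$ with $\mathcal Tf=zf$ lies in $D_1$, i.e. $f(e_1,e_2,\dots)$ depends only on $e_1$.
   Context: $G$ is a connected, locally finite graph (no loops, no multiple edges, every vertex of degree $\ge2$), possibly infinite. $E$ oriented edges with $\iota,\tau$, opposite $\bar e$; turn $e\rightsquigarrow e'$ iff $\tau(e)=\iota(e')$, $e'\ne\bar e$. $P$ = infinite paths $(e_1,e_2,\dots)$ with $e_i\rightsquigarrow e_{i+1}$; $(\mathcal Tf)(e_1,\dots)=\sum_{e_0\rightsquigarrow e_1}f(e_0,e_1,\dots)$. $R_n=\sup_e\#\{(e_{-n},\dots,e_0):e_i\rightsquigarrow e_{i+1},\ e_0=e\}$. $D_1$ = bounded functions on $P$ depending only on the first edge. $d_\theta(p,p')=\theta^{k-1}$, $k=\min\{i:e_i\ne e'_i\}$; $\mathrm{Lip}_\theta$ = bounded $f:P\to\mathbb C$ uniformly $d_\theta$-Lipschitz on each island $\{p:\iota(e_1)=v\}$. *)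

theory Defs
  imports "HOL-Analysis.Analysis"
begin

text \<open>Oriented edges are pairs (u,v) with adj u v; iota = fst, tau = snd,
  reversed edge = (snd e, fst e). Paths (e_1,e_2,...) are indexed from 0.\<close>

definition nbrs :: "('v \<Rightarrow> 'v \<Rightarrow> bool) \<Rightarrow> 'v \<Rightarrow> 'v set" where
  "nbrs adj v = {w. adj v w}"

definition graph_ok :: "('v \<Rightarrow> 'v \<Rightarrow> bool) \<Rightarrow> bool" where
  "graph_ok adj \<longleftrightarrow>
     (\<forall>u v. adj u v \<longrightarrow> adj v u) \<and> (\<forall>v. \<not> adj v v) \<and>
     (\<forall>u v. adj\<^sup>*\<^sup>* u v) \<and>
     (\<forall>v. finite (nbrs adj v) \<and> card (nbrs adj v) \<ge> 2)"

definition bounded_degree :: "('v \<Rightarrow> 'v \<Rightarrow> bool) \<Rightarrow> bool" where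
  "bounded_degree adj \<longleftrightarrow> (\<exists>M::nat. \<forall>v. card (nbrs adj v) \<le> M)"

definition is_edge :: "('v \<Rightarrow> 'v \<Rightarrow> bool) \<Rightarrow> 'v \<times> 'v \<Rightarrow> bool" where
  "is_edge adj e \<longleftrightarrow> adj (fst e) (snd e)"

definition turn :: "('v \<Rightarrow> 'v \<Rightarrow> bool) \<Rightarrow> 'v \<times> 'v \<Rightarrow> 'v \<times> 'v \<Rightarrow> bool" where
  "turn adj e e' \<longleftrightarrow> is_edge adj e \<and> is_edge adj e' \<and> snd e = fst e' \<and> e' \<noteq> (snd e, fst e)"

definition paths :: "('v \<Rightarrow> 'v \<Rightarrow> bool) \<Rightarrow> (nat \<Rightarrow> 'v \<times> 'v) set" where
  "paths adj = {p. \<forall>i. turn adj (p i) (p (Suc i))}"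

text \<open>Transfer operator: (T f)(e_1,...) = sum over e_0 turning into e_1 of f(e_0,e_1,...).\<close>
definition transfer :: "('v \<Rightarrow> 'v \<Rightarrow> bool) \<Rightarrow> ((nat \<Rightarrow> 'v \<times> 'v) \<Rightarrow> complex)
    \<Rightarrow> (nat \<Rightarrow> 'v \<times> 'v) \<Rightarrow> complex" where
  "transfer adj f p = (\<Sum>e0\<in>{e0. turn adj e0 (p 0)}. f (case_nat e0 p))"

definition Rn :: "('v \<Rightarrow> 'v \<Rightarrow> bool) \<Rightarrow> nat \<Rightarrow> nat" where
  "Rn adj n = Sup {card {xs. length xs = Suc n \<and> last xs = e \<and> (\<forall>x\<in>set xs. is_edge adj x)
                      \<and> (\<forall>i<n. turn adj (xs ! i) (xs ! Suc i))} | e. is_edge adj e}"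

text \<open>d_theta(p,p') = theta^(k-1), k the first (1-based) index where they differ; 0 if equal.\<close>
definition dtheta :: "real \<Rightarrow> (nat \<Rightarrow> 'e) \<Rightarrow> (nat \<Rightarrow> 'e) \<Rightarrow> real" where
  "dtheta \<theta> p p' = (if p = p' then 0 else \<theta> ^ (LEAST i. p i \<noteq> p' i))"

definition Lip_theta :: "('v \<Rightarrow> 'v \<Rightarrow> bool) \<Rightarrow> real \<Rightarrow> ((nat \<Rightarrow> 'v \<times> 'v) \<Rightarrow> complex) \<Rightarrow> bool" where
  "Lip_theta adj \<theta> f \<longleftrightarrow>
     (\<exists>B. \<forall>p\<in>paths adj. norm (f p) \<le> B) \<and>
     (\<exists>C. \<forall>p\<in>paths adj. \<forall>p'\<in>paths adj. fst (p 0) = fst (p' 0) \<longrightarrow>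
            norm (f p - f p') \<le> C * dtheta \<theta> p p')"

definition in_D1 :: "('v \<Rightarrow> 'v \<Rightarrow> bool) \<Rightarrow> ((nat \<Rightarrow> 'v \<times> 'v) \<Rightarrow> complex) \<Rightarrow> bool" where
  "in_D1 adj f \<longleftrightarrow>
     (\<exists>B. \<forall>p\<in>paths adj. norm (f p) \<le> B) \<and>
     (\<forall>p\<in>paths adj. \<forall>p'\<in>paths adj. p 0 = p' 0 \<longrightarrow> f p = f p')"

end

theory Submission
  imports Defs
begin

text \<open>If p and p' share their first edge, applying the eigenvalue equation n times writes
  z^n (f p - f p') as a sum over the backward turn-chains of length n ending at that edge of
  differences of f at paths agreeing in n further edges. Each such pair starts at a common
  edge, so its difference is at most K \<theta>^n d(p,p') for a Lipschitz constant K,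
  and there are at most R_n chains, so |f p - f p'| \<le> K d(p,p') R_n (\<theta>/|z|)^n.
  Since root n R_n tends to \<rho> and \<theta>\<rho>/|z| < 1, the root test makes the right-hand side tend to 0.\<close>

definition chains :: "('v \<Rightarrow> 'v \<Rightarrow> bool) \<Rightarrow> nat \<Rightarrow> 'v \<times> 'v \<Rightarrow> ('v \<times> 'v) list set" where
  "chains adj n e = {xs. length xs = Suc n \<and> last xs = e \<and> (\<forall>x\<in>set xs. is_edge adj x)
                      \<and> (\<forall>i<n. turn adj (xs ! i) (xs ! Suc i))}"

lemma Rn_eq_Sup_card_chains: "Rn adj n = Sup {card (chains adj n e) | e. is_edge adj e}"
  unfolding Rn_def chains_def ..

lemma chains_0: "is_edge adj e \<Longrightarrow> chains adj 0 e = {[e]}"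
  unfolding chains_def by (auto simp: length_Suc_conv)

lemma chains_Suc:
  "chains adj (Suc n) e = (\<Union>e0\<in>{e0. turn adj e0 e}. (\<lambda>ys. ys @ [e]) ` chains adj n e0)"
proof
  show "chains adj (Suc n) e \<subseteq> (\<Union>e0\<in>{e0. turn adj e0 e}. (\<lambda>ys. ys @ [e]) ` chains adj n e0)"
  proof
    fix xs assume "xs \<in> chains adj (Suc n) e"
    hence len: "length xs = Suc (Suc n)" and "last xs = e"
      and edges: "\<forall>x\<in>set xs. is_edge adj x" and turns: "\<forall>i<Suc n. turn adj (xs ! i) (xs ! Suc i)"
      by (auto simp: chains_def)
    define ys where "ys = butlast xs"
    have "xs \<noteq> []" using len by auto
    hence xs_eq: "xs = ys @ [e]"
      using \<open>last xs = e\<close> unfolding ys_def by (metis append_butlast_last_id)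
    have len_ys: "length ys = Suc n" using len by (simp add: ys_def)
    have "ys \<noteq> []" using len_ys by auto
    hence "last ys = xs ! n"
      using len_ys xs_eq last_conv_nth[of ys] by (simp add: nth_append)
    moreover have "turn adj (xs ! n) e"
      using turns[rule_format, of n] xs_eq len_ys by (simp add: nth_append)
    moreover have "\<forall>i<n. turn adj (ys ! i) (ys ! Suc i)"
    proof (intro allI impI)
      fix i assume "i < n"
      thus "turn adj (ys ! i) (ys ! Suc i)"
        using turns[rule_format, of i] len_ys xs_eq by (simp add: nth_append)
    qed
    ultimately have "turn adj (xs ! n) e" and "ys \<in> chains adj n (xs ! n)"
      using xs_eq len_ys edges unfolding chains_def by auto
    thus "xs \<in> (\<Union>e0\<in>{e0. turn adj e0 e}. (\<lambda>ys. ys @ [e]) ` chains adj n e0)"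
      using xs_eq by blast
  qed
next
  show "(\<Union>e0\<in>{e0. turn adj e0 e}. (\<lambda>ys. ys @ [e]) ` chains adj n e0) \<subseteq> chains adj (Suc n) e"
  proof clarify
    fix e0 ys assume turn_e0: "turn adj e0 e" and "ys \<in> chains adj n e0"
    hence len_ys: "length ys = Suc n" and "last ys = e0"
      and edges: "\<forall>x\<in>set ys. is_edge adj x" and turns: "\<forall>i<n. turn adj (ys ! i) (ys ! Suc i)"
      by (auto simp: chains_def)
    have "ys \<noteq> []" using len_ys by auto
    hence "ys ! n = e0" using \<open>last ys = e0\<close> len_ys by (simp add: last_conv_nth)
    hence "\<forall>i<Suc n. turn adj ((ys @ [e]) ! i) ((ys @ [e]) ! Suc i)"
      using turns turn_e0 len_ys by (auto simp: nth_append less_Suc_eq)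
    moreover have "is_edge adj e" using turn_e0 by (simp add: turn_def)
    ultimately show "ys @ [e] \<in> chains adj (Suc n) e"
      unfolding chains_def using len_ys edges by auto
  qed
qed

lemma dtheta_case_nat:
  fixes p p' :: "nat \<Rightarrow> 'e"
  shows "dtheta \<theta> (case_nat e0 p) (case_nat e0 p') = \<theta> * dtheta \<theta> p p'"
proof (cases "p = p'")
  case True thus ?thesis by (simp add: dtheta_def)
next
  case False
  then obtain n where n: "p n \<noteq> p' n" by auto
  hence "case_nat e0 p \<noteq> case_nat e0 p'" by (metis nat.simps(5))
  moreover have "(LEAST i. case_nat e0 p i \<noteq> case_nat e0 p' i)
      = Suc (LEAST m. case_nat e0 p (Suc m) \<noteq> case_nat e0 p' (Suc m))"
    by (rule Least_Suc[of _ "Suc n"]) (use n in auto)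
  ultimately show ?thesis using False by (simp add: dtheta_def)
qed

lemma dtheta_nonneg: "0 \<le> \<theta> \<Longrightarrow> 0 \<le> dtheta \<theta> p p'"
  by (simp add: dtheta_def)

lemma case_nat_in_paths: "p \<in> paths adj \<Longrightarrow> turn adj e0 (p 0) \<Longrightarrow> case_nat e0 p \<in> paths adj"
  unfolding paths_def by (auto split: nat.split)

lemma is_edge_paths_0: "p \<in> paths adj \<Longrightarrow> is_edge adj (p 0)"
  unfolding paths_def turn_def by blast

lemma Lip_theta_nonneg_constant:
  assumes "Lip_theta adj \<theta> f" and "0 \<le> \<theta>"
  obtains K where "0 \<le> K" and "\<forall>p\<in>paths adj. \<forall>p'\<in>paths adj. fst (p 0) = fst (p' 0) \<longrightarrow>
      norm (f p - f p') \<le> K * dtheta \<theta> p p'"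
proof -
  obtain C where C: "\<forall>p\<in>paths adj. \<forall>p'\<in>paths adj. fst (p 0) = fst (p' 0) \<longrightarrow>
      norm (f p - f p') \<le> C * dtheta \<theta> p p'"
    using assms(1) unfolding Lip_theta_def by blast
  have "\<forall>p\<in>paths adj. \<forall>p'\<in>paths adj. fst (p 0) = fst (p' 0) \<longrightarrow>
      norm (f p - f p') \<le> max C 0 * dtheta \<theta> p p'"
  proof (intro ballI impI)
    fix p p' assume "p \<in> paths adj" "p' \<in> paths adj" "fst (p 0) = fst (p' 0)"
    hence "norm (f p - f p') \<le> C * dtheta \<theta> p p'" using C by blast
    also have "\<dots> \<le> max C 0 * dtheta \<theta> p p'"
      by (intro mult_right_mono dtheta_nonneg assms(2)) auto
    finally show "norm (f p - f p') \<le> max C 0 * dtheta \<theta> p p'" .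
  qed
  thus thesis by (intro that[of "max C 0"]) auto
qed

lemma scaled_tendsto_zero_by_root_test:
  fixes a :: "nat \<Rightarrow> real"
  assumes "(\<lambda>n. root n (a n)) \<longlonglongrightarrow> \<rho>" and "\<forall>n. 0 \<le> a n" and "0 < c" and "\<rho> * c < 1"
  shows "(\<lambda>n. a n * c ^ n) \<longlonglongrightarrow> 0"
proof -
  have "\<forall>\<^sub>F n in sequentially. root n (a n) * c = root n (norm (a n * c ^ n))"
    using eventually_gt_at_top[of 0]
  proof eventually_elim
    case (elim n)
    have "root n (norm (a n * c ^ n)) = root n (a n * c ^ n)"
      using assms(2,3) by simp
    also have "\<dots> = root n (a n) * c"
      using elim assms(3) by (simp add: real_root_mult real_root_power_cancel)
    finally show ?case by simp
  qed
  moreover have "(\<lambda>n. root n (a n) * c) \<longlonglongrightarrow> \<rho> * c"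
    by (intro tendsto_mult_right assms(1))
  ultimately have "(\<lambda>n. root n (norm (a n * c ^ n))) \<longlonglongrightarrow> \<rho> * c"
    by (rule Lim_transform_eventually[rotated])
  hence "summable (\<lambda>n. a n * c ^ n)" using assms(4) by (rule root_test_convergence)
  thus ?thesis by (rule summable_LIMSEQ_zero)
qed

locale bounded_degree_graph =
  fixes adj :: "'v \<Rightarrow> 'v \<Rightarrow> bool" and M :: nat
  assumes adj_sym: "\<And>u v. adj u v \<Longrightarrow> adj v u"
    and finite_nbrs: "\<And>v. finite (nbrs adj v)"
    and card_nbrs_le: "\<And>v. card (nbrs adj v) \<le> M"
begin

lemma turn_predecessors_subset: "{e0. turn adj e0 e} \<subseteq> (\<lambda>w. (w, fst e)) ` nbrs adj (fst e)"
proof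
  fix e0 assume "e0 \<in> {e0. turn adj e0 e}"
  hence "adj (fst e0) (snd e0)" "snd e0 = fst e" by (auto simp: turn_def is_edge_def)
  hence "fst e0 \<in> nbrs adj (fst e)" "e0 = (fst e0, fst e)"
    using adj_sym by (auto simp: nbrs_def prod_eq_iff)
  thus "e0 \<in> (\<lambda>w. (w, fst e)) ` nbrs adj (fst e)" by blast
qed

lemma finite_turn_predecessors: "finite {e0. turn adj e0 e}"
  using turn_predecessors_subset finite_nbrs finite_subset by blast

lemma card_turn_predecessors_le: "card {e0. turn adj e0 e} \<le> M"
proof -
  have "card {e0. turn adj e0 e} \<le> card ((\<lambda>w. (w, fst e)) ` nbrs adj (fst e))"
    using turn_predecessors_subset finite_nbrs by (intro card_mono) auto
  also have "\<dots> \<le> card (nbrs adj (fst e))" by (rule card_image_le[OF finite_nbrs])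
  finally show ?thesis using card_nbrs_le order_trans by blast
qed

lemma finite_chains: "finite (chains adj n e)"
proof (induction n arbitrary: e)
  case 0
  have "chains adj 0 e \<subseteq> {[e]}" by (auto simp: chains_def length_Suc_conv)
  thus ?case using finite_subset by blast
next
  case (Suc n)
  thus ?case
    unfolding chains_Suc by (intro finite_UN_I finite_turn_predecessors finite_imageI)
qed

lemma card_chains_Suc:
  "card (chains adj (Suc n) e) = (\<Sum>e0\<in>{e0. turn adj e0 e}. card (chains adj n e0))"
proof -
  have "card (chains adj (Suc n) e)
      = (\<Sum>e0\<in>{e0. turn adj e0 e}. card ((\<lambda>ys. ys @ [e]) ` chains adj n e0))"
    unfolding chains_Suc
  proof (rule card_UN_disjoint)
    show "\<forall>e0\<in>{e0. turn adj e0 e}. \<forall>e1\<in>{e0. turn adj e0 e}. e0 \<noteq> e1 \<longrightarrow>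
        (\<lambda>ys. ys @ [e]) ` chains adj n e0 \<inter> (\<lambda>ys. ys @ [e]) ` chains adj n e1 = {}"
      by (auto simp: chains_def)
  qed (auto simp: finite_turn_predecessors finite_chains)
  also have "\<dots> = (\<Sum>e0\<in>{e0. turn adj e0 e}. card (chains adj n e0))"
    by (intro sum.cong refl card_image) (auto simp: inj_on_def)
  finally show ?thesis .
qed

lemma card_chains_le_power: "card (chains adj n e) \<le> M ^ n"
proof (induction n arbitrary: e)
  case 0
  have "chains adj 0 e \<subseteq> {[e]}" by (auto simp: chains_def length_Suc_conv)
  hence "card (chains adj 0 e) \<le> card {[e]}" by (intro card_mono) auto
  thus ?case by simp
next
  case (Suc n)
  have "card (chains adj (Suc n) e) \<le> (\<Sum>e0\<in>{e0. turn adj e0 e}. M ^ n)"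
    unfolding card_chains_Suc by (intro sum_mono Suc)
  also have "\<dots> \<le> M * M ^ n" using card_turn_predecessors_le by (simp add: mult_right_mono)
  finally show ?case by simp
qed

lemma card_chains_le_Rn:
  assumes "is_edge adj e"
  shows "card (chains adj n e) \<le> Rn adj n"
  unfolding Rn_eq_Sup_card_chains
proof (rule cSup_upper)
  show "card (chains adj n e) \<in> {card (chains adj n e) | e. is_edge adj e}"
    using assms by blast
  show "bdd_above {card (chains adj n e) | e. is_edge adj e}"
    using card_chains_le_power by (auto intro!: bdd_aboveI[of _ "M ^ n"])
qed

lemma eigenfunction_diff_bound:
  fixes f :: "(nat \<Rightarrow> 'v \<times> 'v) \<Rightarrow> complex" and z :: complex
  assumes eigen: "\<forall>p\<in>paths adj. transfer adj f p = z * f p"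
    and lip: "\<forall>p\<in>paths adj. \<forall>p'\<in>paths adj. fst (p 0) = fst (p' 0) \<longrightarrow>
            norm (f p - f p') \<le> K * dtheta \<theta> p p'"
    and "0 \<le> K" and "0 \<le> \<theta>"
  shows "p \<in> paths adj \<Longrightarrow> p' \<in> paths adj \<Longrightarrow> p 0 = p' 0 \<Longrightarrow>
     norm z ^ n * norm (f p - f p') \<le> K * \<theta> ^ n * card (chains adj n (p 0)) * dtheta \<theta> p p'"
proof (induction n arbitrary: p p')
  case 0
  thus ?case using lip chains_0[OF is_edge_paths_0[OF "0.prems"(1)]] by simp
next
  case (Suc n)
  define S where "S = {e0. turn adj e0 (p 0)}"
  have "norm z ^ Suc n * norm (f p - f p') = norm z ^ n * norm (z * f p - z * f p')"
    by (simp add: norm_mult flip: right_diff_distrib)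
  also have "z * f p - z * f p' = transfer adj f p - transfer adj f p'"
    using eigen Suc.prems by simp
  also have "\<dots> = (\<Sum>e0\<in>S. f (case_nat e0 p) - f (case_nat e0 p'))"
    unfolding transfer_def S_def using Suc.prems(3) by (simp add: sum_subtractf)
  also have "norm z ^ n * norm \<dots>
      \<le> norm z ^ n * (\<Sum>e0\<in>S. norm (f (case_nat e0 p) - f (case_nat e0 p')))"
    by (intro mult_left_mono norm_sum) auto
  also have "\<dots> = (\<Sum>e0\<in>S. norm z ^ n * norm (f (case_nat e0 p) - f (case_nat e0 p')))"
    by (simp add: sum_distrib_left)
  also have "\<dots> \<le> (\<Sum>e0\<in>S. K * \<theta> ^ n * card (chains adj n e0)
                                * dtheta \<theta> (case_nat e0 p) (case_nat e0 p'))"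
  proof (rule sum_mono)
    fix e0 assume "e0 \<in> S"
    hence "case_nat e0 p \<in> paths adj" "case_nat e0 p' \<in> paths adj"
      using Suc.prems by (auto simp: S_def intro: case_nat_in_paths)
    thus "norm z ^ n * norm (f (case_nat e0 p) - f (case_nat e0 p'))
       \<le> K * \<theta> ^ n * card (chains adj n e0) * dtheta \<theta> (case_nat e0 p) (case_nat e0 p')"
      using Suc.IH[of "case_nat e0 p" "case_nat e0 p'"] by simp
  qed
  also have "\<dots> = K * \<theta> ^ Suc n * dtheta \<theta> p p' * (\<Sum>e0\<in>S. card (chains adj n e0))"
    by (simp add: dtheta_case_nat sum_distrib_left mult_ac)
  also have "(\<Sum>e0\<in>S. card (chains adj n e0)) = card (chains adj (Suc n) (p 0))"
    unfolding S_def card_chains_Suc ..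
  finally show ?case by (simp add: mult_ac)
qed

lemma eigenfunction_depends_on_first_edge:
  fixes f :: "(nat \<Rightarrow> 'v \<times> 'v) \<Rightarrow> complex" and z :: complex
  assumes eigen: "\<forall>p\<in>paths adj. transfer adj f p = z * f p"
    and lip: "\<forall>p\<in>paths adj. \<forall>p'\<in>paths adj. fst (p 0) = fst (p' 0) \<longrightarrow>
            norm (f p - f p') \<le> K * dtheta \<theta> p p'"
    and "0 \<le> K" and "0 < \<theta>" and "z \<noteq> 0"
    and Rn_decay: "(\<lambda>n. real (Rn adj n) * (\<theta> / norm z) ^ n) \<longlonglongrightarrow> 0"
    and p: "p \<in> paths adj" "p' \<in> paths adj" "p 0 = p' 0"
  shows "f p = f p'"
proof -
  define L where "L = K * dtheta \<theta> p p'"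
  have bound: "norm (f p - f p') \<le> L * (real (Rn adj n) * (\<theta> / norm z) ^ n)" for n
  proof -
    have "norm z ^ n * norm (f p - f p') \<le> K * \<theta> ^ n * card (chains adj n (p 0)) * dtheta \<theta> p p'"
      using eigenfunction_diff_bound[OF eigen lip] assms(3,4) p by simp
    also have "\<dots> \<le> K * \<theta> ^ n * real (Rn adj n) * dtheta \<theta> p p'"
      using card_chains_le_Rn[OF is_edge_paths_0[OF p(1)], of n] assms(3,4)
      by (intro mult_right_mono mult_left_mono dtheta_nonneg) auto
    also have "\<dots> = norm z ^ n * (L * (real (Rn adj n) * (\<theta> / norm z) ^ n))"
      using \<open>z \<noteq> 0\<close> by (simp add: L_def power_divide)
    finally show ?thesis using \<open>z \<noteq> 0\<close> by simp
  qed
  have "(\<lambda>n. L * (real (Rn adj n) * (\<theta> / norm z) ^ n)) \<longlonglongrightarrow> L * 0"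
    by (intro tendsto_mult_left Rn_decay)
  hence "norm (f p - f p') \<le> L * 0"
    by (rule LIMSEQ_le_const) (use bound in auto)
  thus ?thesis by simp
qed

end

theorem mainTheorem8:
  fixes adj :: "'v \<Rightarrow> 'v \<Rightarrow> bool" and \<theta> \<rho> :: real and z :: complex
    and f :: "(nat \<Rightarrow> 'v \<times> 'v) \<Rightarrow> complex"
  assumes "graph_ok adj" and "bounded_degree adj"
    and "0 < \<theta>" and "\<theta> < 1"
    and "(\<lambda>n. root n (real (Rn adj n))) \<longlonglongrightarrow> \<rho>"
    and "norm z > \<theta> * \<rho>"
    and "Lip_theta adj \<theta> f"
    and "\<forall>p\<in>paths adj. transfer adj f p = z * f p"
  shows "in_D1 adj f"
proof -
  obtain M where "\<forall>v. card (nbrs adj v) \<le> M"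
    using assms(2) unfolding bounded_degree_def by blast
  moreover have "\<forall>u v. adj u v \<longrightarrow> adj v u" and "\<forall>v. finite (nbrs adj v)"
    using assms(1) unfolding graph_ok_def by simp_all
  ultimately interpret bounded_degree_graph adj M
    by unfold_locales simp_all
  obtain K where "0 \<le> K" and lip: "\<forall>p\<in>paths adj. \<forall>p'\<in>paths adj. fst (p 0) = fst (p' 0) \<longrightarrow>
      norm (f p - f p') \<le> K * dtheta \<theta> p p'"
    by (rule Lip_theta_nonneg_constant[OF assms(7) less_imp_le[OF assms(3)]])
  have "0 \<le> \<rho>"
    by (rule LIMSEQ_le_const[OF assms(5)]) (intro exI[of _ 0] allI impI real_root_ge_zero, simp)
  hence "0 \<le> \<theta> * \<rho>" using assms(3) by simp
  hence "0 < norm z" using assms(6) by linarith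
  moreover have "\<rho> * (\<theta> / norm z) < 1"
    using assms(6) \<open>0 < norm z\<close> by (simp add: field_simps)
  ultimately have decay: "(\<lambda>n. real (Rn adj n) * (\<theta> / norm z) ^ n) \<longlonglongrightarrow> 0"
    using assms(3) by (intro scaled_tendsto_zero_by_root_test[OF assms(5)]) auto
  have "z \<noteq> 0" using \<open>0 < norm z\<close> by auto
  have "f p = f p'" if "p \<in> paths adj" "p' \<in> paths adj" "p 0 = p' 0" for p p'
    by (rule eigenfunction_depends_on_first_edge[OF assms(8) lip \<open>0 \<le> K\<close> assms(3)
          \<open>z \<noteq> 0\<close> decay that])
  moreover have "\<exists>B. \<forall>p\<in>paths adj. norm (f p) \<le> B"
    using assms(7) unfolding Lip_theta_def by (rule conjunct1)
  ultimately show ?thesis unfolding in_D1_def by blast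
qed

end
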